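(* Let $m\ge1$ and $k\ge 1$ be integers, and let $q_k=\lfloor mk/(m+1)\rfloor$. There are unique real numbers $a_{k,0,m}$ and $a_{k,l,r}$ ($1\le l\le q_k$, $0\le r\le m$) such that, in $\mathbb{R}[x]$, $$\big((x-1)^{\underline m}\big)^k=a_{k,0,m}(x-1)^{\underline m}+\sum_{l=1}^{q_k}\sum_{r=0}^m a_{k,l,r}\big((x)^{\underline{m+1}}\big)^l(x+r-m-1)^{\underline r}.$$
   Context: Falling factorials are $(y)^{\underline 0}=1$ and $(y)^{\underline j}=y(y-1)\cdots(y-j+1)$ for $j\ge 1$. *)

theory Defs
  imports "HOL-Computational_Algebra.Polynomial"
begin

definition ffpoly :: "real poly \<Rightarrow> nat \<Rightarrow> real poly" where
  "ffpoly y j = (\<Prod>i<j. y - [:of_nat i:])"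

end

theory Submission
  imports Defs
begin

text \<open>
  Write P = (x - 1)_m and F = (x)_(m+1) = x P. Since P^(k-1) - P(0)^(k-1) vanishes at 0,
  P^k = c P + F h with deg h < m (k - 1) \<le> q (m + 1). The products F^l (x + r - m - 1)_r with
  0 \<le> r \<le> m have degree l (m + 1) + r, so there is exactly one of each degree. Hence h is a
  combination of those with l < q, and multiplying by F gives the expansion. Uniqueness holds
  because P is the product with l = 0, r = m, and polynomials of pairwise distinct degrees are
  linearly independent.
\<close>


lemma ffpoly_Suc: "ffpoly y (Suc n) = y * ffpoly (y - 1) n"
proof -
  have shift: "y - [:of_nat (Suc i):] = y - 1 - [:of_nat i:]" for i
    by (simp add: one_pCons)
  show ?thesis
    unfolding ffpoly_def prod.lessThan_Suc_shift shift by simp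
qed

lemma
  assumes "degree y = 1"
  shows ffpoly_nonzero: "ffpoly y n \<noteq> 0"
    and degree_ffpoly: "degree (ffpoly y n) = n"
proof -
  have "degree (y - [:of_nat i:]) = 1" for i :: nat
    using assms degree_add_eq_left[of "- [:of_nat i:]" y]
    by (metis diff_conv_add_uminus degree_minus degree_pCons_0 zero_less_one)
  then have factor: "y - [:of_nat i:] \<noteq> 0 \<and> degree (y - [:of_nat i:]) = 1" for i :: nat
    by (metis degree_0 zero_neq_one)
  then show "ffpoly y n \<noteq> 0"
    unfolding ffpoly_def by simp
  show "degree (ffpoly y n) = n"
    unfolding ffpoly_def using factor by (simp add: degree_prod_sum_eq)
qed

lemma sum_smult_eq_0_distinct_degrees:
  fixes B :: "'i \<Rightarrow> 'a::idom poly"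
  assumes "finite S" and "inj_on (\<lambda>i. degree (B i)) S" and "\<And>i. i \<in> S \<Longrightarrow> B i \<noteq> 0"
    and "(\<Sum>i\<in>S. smult (c i) (B i)) = 0" and "i \<in> S"
  shows "c i = 0"
proof (rule ccontr)
  \<comment> \<open>Among the terms with nonzero coefficient, the one of largest degree is alone in that degree.\<close>
  assume "c i \<noteq> 0"
  define T where "T = {j \<in> S. c j \<noteq> 0}"
  define d where "d = Max ((\<lambda>j. degree (B j)) ` T)"
  have "finite T" "T \<noteq> {}"
    using assms(1,5) \<open>c i \<noteq> 0\<close> unfolding T_def by auto
  then obtain j where j: "j \<in> T" "degree (B j) = d"
    unfolding d_def by (metis (no_types, lifting) Max_in finite_imageI image_iff image_is_empty)
  have below: "degree (B j') \<le> d" if "j' \<in> T" for j'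
    unfolding d_def using \<open>finite T\<close> that by simp
  have "coeff (\<Sum>i\<in>S. smult (c i) (B i)) d = (\<Sum>i\<in>S. c i * coeff (B i) d)"
    by (simp add: coeff_sum)
  also have "\<dots> = (\<Sum>i\<in>{j}. c i * coeff (B i) d)"
  proof (rule sum.mono_neutral_right)
    show "\<forall>j'\<in>S - {j}. c j' * coeff (B j') d = 0"
    proof
      fix j' assume j': "j' \<in> S - {j}"
      show "c j' * coeff (B j') d = 0"
      proof (cases "j' \<in> T")
        case True
        then have "degree (B j') \<noteq> d"
          using j j' assms(2) unfolding T_def inj_on_def by auto
        with below[OF True] show ?thesis
          by (simp add: coeff_eq_0)
      qed (use j' T_def in simp)
    qed
  qed (use assms(1) j T_def in auto)
  also have "\<dots> \<noteq> 0"
    using j assms(3) unfolding T_def by auto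
  finally show False
    using assms(4) by simp
qed

lemma sum_smult_exists_if_degrees_covered:
  fixes B :: "'i \<Rightarrow> 'a::field poly"
  assumes "finite S" and "\<And>n. n < N \<Longrightarrow> \<exists>i\<in>S. B i \<noteq> 0 \<and> degree (B i) = n"
    and "p = 0 \<or> degree p < N"
  shows "\<exists>c. p = (\<Sum>i\<in>S. smult (c i) (B i))"
  using assms(2,3)
proof (induction N arbitrary: p)
  case 0
  then show ?case
    by (intro exI[of _ "\<lambda>_. 0"]) simp
next
  case (Suc N)
  have IH: "\<exists>c. p = (\<Sum>i\<in>S. smult (c i) (B i))" if "p = 0 \<or> degree p < N" for p
    using Suc.IH Suc.prems(1) that by simp
  show ?case
  proof (cases "p = 0 \<or> degree p < N")
    case True
    then show ?thesis
      by (rule IH)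
  next
    case False
    then have "degree p = N"
      using Suc.prems(2) by simp
    obtain i where i: "i \<in> S" "B i \<noteq> 0" "degree (B i) = N"
      using Suc.prems(1) by blast
    have "coeff (B i) N \<noteq> 0"
      using i by (metis leading_coeff_0_iff)
    define d where "d = coeff p N / coeff (B i) N"
    define p' where "p' = p - smult d (B i)"
    have "degree p' \<le> N"
      unfolding p'_def using \<open>degree p = N\<close> i by (simp add: degree_diff_le)
    moreover have "coeff p' N = 0"
      unfolding p'_def d_def using \<open>coeff (B i) N \<noteq> 0\<close> by simp
    ultimately have "p' = 0 \<or> degree p' < N"
      by (metis le_neq_implies_less leading_coeff_0_iff)
    then obtain c where c: "p' = (\<Sum>j\<in>S. smult (c j) (B j))"
      using IH by blast
    have "p = smult d (B i) + p'"
      unfolding p'_def by simp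
    also have "\<dots> = (\<Sum>j\<in>S. smult (c j + (if j = i then d else 0)) (B j))"
    proof -
      have "(\<Sum>j\<in>S. smult (if j = i then d else 0) (B j)) = smult d (B i)"
        using i assms(1) by (simp add: if_distrib[of "\<lambda>x. smult x _"] cong: if_cong)
      then show ?thesis
        unfolding c by (simp add: smult_add_left sum.distrib)
    qed
    finally show ?thesis
      by (rule exI[of _ "\<lambda>j. c j + (if j = i then d else 0)"])
  qed
qed

lemma power_Suc_smult_plus_X_mult:
  fixes p :: "'a::comm_ring_1 poly"
  obtains c h where "p ^ Suc n = smult c p + [:0, 1:] * p * h"
    and "h = 0 \<or> degree h < degree p * n"
proof -
  define c where "c = poly p 0 ^ n"
  have "poly (p ^ n - [:c:]) 0 = 0"
    unfolding c_def by simp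
  then have "[:0, 1:] dvd p ^ n - [:c:]"
    by (metis poly_eq_0_iff_dvd minus_zero)
  then obtain h where h: "p ^ n - [:c:] = [:0, 1:] * h"
    by (rule dvdE)
  have "p ^ Suc n = p * (p ^ n - [:c:]) + smult c p"
    by (simp add: algebra_simps)
  then have "p ^ Suc n = smult c p + [:0, 1:] * p * h"
    unfolding h by (simp add: algebra_simps)
  moreover have "h = 0 \<or> degree h < degree p * n"
  proof (cases "h = 0")
    case False
    then have "Suc (degree h) = degree (p ^ n - [:c:])"
      unfolding h by (simp add: mult_pCons_left)
    also have "\<dots> \<le> degree p * n"
      by (intro degree_diff_le degree_power_le) simp
    finally show ?thesis
      by simp
  qed simp
  ultimately show ?thesis
    using that by blast
qed

definition ff_basis :: "nat \<Rightarrow> nat \<Rightarrow> nat \<Rightarrow> real poly" where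
  "ff_basis m l r = ffpoly [:0, 1:] (m + 1) ^ l * ffpoly [:of_nat r - of_nat m - 1, 1:] r"

lemma
  shows ff_basis_nonzero: "ff_basis m l r \<noteq> 0"
    and degree_ff_basis: "degree (ff_basis m l r) = l * (m + 1) + r"
  unfolding ff_basis_def
  by (simp_all add: ffpoly_nonzero degree_ffpoly degree_mult_eq degree_power_eq)

lemma inj_on_degree_ff_basis: "inj_on (\<lambda>i. degree (case_prod (ff_basis m) i)) (UNIV \<times> {..m})"
proof -
  have digits: "(x * n + y) div n = x" "(x * n + y) mod n = y" if "y < n" for x y n :: nat
    using that by simp_all
  have eq: "l = l' \<and> r = r'"
    if "r \<le> m" "r' \<le> m" "l * (m + 1) + r = l' * (m + 1) + r'" for l r l' r'
    using that digits[of r "m + 1" l] digits[of r' "m + 1" l']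
    by (simp only: Suc_eq_plus1[symmetric] le_imp_less_Suc)
  show ?thesis
    unfolding inj_on_def by (clarsimp simp: degree_ff_basis simp del: One_nat_def) (rule eq)
qed

lemma ff_basis_0_self: "ff_basis m 0 m = ffpoly [:-1, 1:] m"
  by (simp add: ff_basis_def)

lemma ff_basis_Suc: "ff_basis m (Suc l) r = [:0, 1:] * ffpoly [:-1, 1:] m * ff_basis m l r"
proof -
  have "ffpoly [:0, 1:] (m + 1) = [:0, 1:] * ffpoly [:-1, 1:] m"
    by (simp add: ffpoly_Suc one_pCons)
  then show ?thesis
    by (simp add: ff_basis_def algebra_simps)
qed

lemma ff_basis_expansion_unique:
  assumes "finite L" and "0 \<notin> L"
    and "smult a0 (ffpoly [:-1, 1:] m) + (\<Sum>(l, r)\<in>L \<times> {0..m}. smult (a l r) (ff_basis m l r))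
       = smult b0 (ffpoly [:-1, 1:] m) + (\<Sum>(l, r)\<in>L \<times> {0..m}. smult (b l r) (ff_basis m l r))"
  shows "a0 = b0" and "\<forall>l\<in>L. \<forall>r\<in>{0..m}. a l r = b l r"
proof -
  define S where "S = insert (0, m) (L \<times> {0..m})"
  define c where "c = (\<lambda>(l, r). if l = 0 then a0 - b0 else a l r - b l r)"
  have "(0, m) \<notin> L \<times> {0..m}"
    using assms(2) by blast
  then have "(\<Sum>(l, r)\<in>S. smult (c (l, r)) (ff_basis m l r))
      = smult (a0 - b0) (ffpoly [:-1, 1:] m)
        + (\<Sum>(l, r)\<in>L \<times> {0..m}. smult (a l r - b l r) (ff_basis m l r))"
    unfolding S_def using assms(1,2) by (auto simp: c_def ff_basis_0_self intro!: sum.cong)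
  also have "\<dots> = 0"
    using assms(3) by (simp add: smult_diff_left sum_subtractf case_prod_unfold algebra_simps)
  finally have sum_0: "(\<Sum>i\<in>S. smult (c i) (case_prod (ff_basis m) i)) = 0"
    by (simp add: case_prod_unfold)
  have fin: "finite S"
    unfolding S_def using assms(1) by simp
  have inj: "inj_on (\<lambda>i. degree (case_prod (ff_basis m) i)) S"
    by (rule inj_on_subset[OF inj_on_degree_ff_basis]) (auto simp: S_def case_prod_unfold)
  have c_0: "c i = 0" if "i \<in> S" for i
    by (rule sum_smult_eq_0_distinct_degrees[OF fin inj _ sum_0 that])
      (simp add: ff_basis_nonzero split: prod.splits)
  have "c (0, m) = 0"
    by (rule c_0) (simp add: S_def)
  then show "a0 = b0"
    by (simp add: c_def)
  show "\<forall>l\<in>L. \<forall>r\<in>{0..m}. a l r = b l r"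
  proof (intro ballI)
    fix l r assume "l \<in> L" "r \<in> {0..m}"
    then have "c (l, r) = 0"
      by (intro c_0) (simp add: S_def)
    moreover have "l \<noteq> 0"
      using \<open>l \<in> L\<close> assms(2) by (metis)
    ultimately show "a l r = b l r"
      by (simp add: c_def)
  qed
qed

lemma ff_basis_expansion_exists:
  assumes "k \<ge> 1"
  obtains a0 a where "ffpoly [:-1, 1:] m ^ k = smult a0 (ffpoly [:-1, 1:] m)
      + (\<Sum>(l, r)\<in>{1..m * k div (m + 1)} \<times> {0..m}. smult (a l r) (ff_basis m l r))"
proof -
  define P where "P = ffpoly [:-1, 1:] m"
  define q where "q = m * k div (m + 1)"
  define S where "S = {1..q} \<times> {0..m}"
  have "degree P = m"
    unfolding P_def by (simp add: degree_ffpoly)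
  obtain a0 h where decomp: "P ^ Suc (k - 1) = smult a0 P + [:0, 1:] * P * h"
    and "h = 0 \<or> degree h < m * (k - 1)"
    using power_Suc_smult_plus_X_mult \<open>degree P = m\<close> by metis
  moreover have "m * (k - 1) \<le> q * (m + 1)"
  proof -
    have "m * k = q * (m + 1) + m * k mod (m + 1)"
      unfolding q_def by (rule div_mult_mod_eq[symmetric])
    moreover have "m * k mod (m + 1) \<le> m"
      using less_Suc_eq_le by auto
    ultimately show ?thesis
      unfolding diff_mult_distrib2 mult_1_right by linarith
  qed
  ultimately have h_small: "h = 0 \<or> degree h < q * (m + 1)"
    by linarith
  have cover: "\<exists>i\<in>S. ff_basis m (fst i - 1) (snd i) \<noteq> 0
      \<and> degree (ff_basis m (fst i - 1) (snd i)) = n"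
    if "n < q * (m + 1)" for n
  proof
    have "n div (m + 1) < q"
      using that by (simp add: div_less_iff_less_mult)
    then show "(n div (m + 1) + 1, n mod (m + 1)) \<in> S"
      unfolding S_def by (auto simp: less_Suc_eq_le)
  qed (use div_mult_mod_eq[of n "m + 1"] in \<open>simp add: ff_basis_nonzero degree_ff_basis\<close>)
  have "finite S"
    by (simp add: S_def)
  then obtain a where h: "h = (\<Sum>i\<in>S. smult (a i) (ff_basis m (fst i - 1) (snd i)))"
    using sum_smult_exists_if_degrees_covered[OF _ cover h_small] by blast
  have X_mult_h: "[:0, 1:] * P * h = (\<Sum>(l, r)\<in>S. smult (a (l, r)) (ff_basis m l r))"
    unfolding h sum_distrib_left
  proof (rule sum.cong)
    fix i assume "i \<in> S"
    then obtain l r where i: "i = (l, r)" and "l \<ge> 1"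
      unfolding S_def by auto
    then have "ff_basis m l r = [:0, 1:] * P * ff_basis m (l - 1) r"
      unfolding P_def using ff_basis_Suc[of m "l - 1" r] by simp
    then show "[:0, 1:] * P * smult (a i) (ff_basis m (fst i - 1) (snd i))
        = (case i of (l, r) \<Rightarrow> smult (a (l, r)) (ff_basis m l r))"
      unfolding i by (simp add: mult_smult_right)
  qed simp
  show ?thesis
  proof (rule that[of a0 "curry a"])
    show "ffpoly [:-1, 1:] m ^ k = smult a0 (ffpoly [:-1, 1:] m)
      + (\<Sum>(l, r)\<in>{1..m * k div (m + 1)} \<times> {0..m}. smult (curry a l r) (ff_basis m l r))"
      using decomp X_mult_h \<open>k \<ge> 1\<close> unfolding P_def S_def q_def by simp
  qed
qed

theorem lemma6p1:
  fixes m k :: nat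
  assumes "m \<ge> 1" and "k \<ge> 1"
  defines "q \<equiv> (m * k) div (m + 1)"
  shows "\<exists>a0 (a :: nat \<Rightarrow> nat \<Rightarrow> real).
     (ffpoly [:-1, 1:] m) ^ k =
        smult a0 (ffpoly [:-1, 1:] m)
        + (\<Sum>l\<in>{1..q}. \<Sum>r\<in>{0..m}.
             smult (a l r) ((ffpoly [:0, 1:] (m + 1)) ^ l
                            * ffpoly [:of_nat r - of_nat m - 1, 1:] r))
     \<and> (\<forall>b0 (b :: nat \<Rightarrow> nat \<Rightarrow> real).
          (ffpoly [:-1, 1:] m) ^ k =
            smult b0 (ffpoly [:-1, 1:] m)
            + (\<Sum>l\<in>{1..q}. \<Sum>r\<in>{0..m}.
                 smult (b l r) ((ffpoly [:0, 1:] (m + 1)) ^ l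
                                * ffpoly [:of_nat r - of_nat m - 1, 1:] r))
          \<longrightarrow> b0 = a0 \<and> (\<forall>l\<in>{1..q}. \<forall>r\<in>{0..m}. b l r = a l r))"
proof -
  have double_sum: "(\<Sum>l\<in>{1..q}. \<Sum>r\<in>{0..m}.
      smult (c l r) ((ffpoly [:0, 1:] (m + 1)) ^ l * ffpoly [:of_nat r - of_nat m - 1, 1:] r))
    = (\<Sum>(l, r)\<in>{1..q} \<times> {0..m}. smult (c l r) (ff_basis m l r))" for c
    by (simp add: sum.cartesian_product ff_basis_def)
  obtain a0 a where expansion: "ffpoly [:-1, 1:] m ^ k = smult a0 (ffpoly [:-1, 1:] m)
      + (\<Sum>(l, r)\<in>{1..q} \<times> {0..m}. smult (a l r) (ff_basis m l r))"
    unfolding q_def by (rule ff_basis_expansion_exists[OF \<open>k \<ge> 1\<close>])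
  moreover have "b0 = a0 \<and> (\<forall>l\<in>{1..q}. \<forall>r\<in>{0..m}. b l r = a l r)"
    if "ffpoly [:-1, 1:] m ^ k = smult b0 (ffpoly [:-1, 1:] m)
      + (\<Sum>(l, r)\<in>{1..q} \<times> {0..m}. smult (b l r) (ff_basis m l r))" for b0 b
    using ff_basis_expansion_unique[OF _ _ trans[OF that[symmetric] expansion]] by simp
  ultimately show ?thesis
    unfolding double_sum by blast
qed

end
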